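(* Let $\mathcal{A}\in\mathbb{R}^{d_1\times\cdots\times d_k}$ be an arbitrary order-$k$ real tensor and let $\pi_1,\pi_2\in\mathcal{P}_{[k]}$ be any two partitions. Then: (a) for any $1\le p\le 2$, \[ \frac{[\dim(\mathcal{A})]^{-1/p}}{[\dim_{\mathcal{A}}(\pi_1,\pi_2)]^{-1/2}}\|\mathrm{Unfold}_{\pi_1}(\mathcal{A})\|_p\le\|\mathrm{Unfold}_{\pi_2}(\mathcal{A})\|_p\le\frac{[\dim(\mathcal{A})]^{1/p}}{[\dim_{\mathcal{A}}(\pi_2,\pi_1)]^{1/2}}\|\mathrm{Unfold}_{\pi_1}(\mathcal{A})\|_p; \] (b) for any $2\le p\le\infty$, \[ \frac{[\dim(\mathcal{A})]^{\frac1p-1}}{[\dim_{\mathcal{A}}(\pi_1,\pi_2)]^{-1/2}}\|\mathrm{Unfold}_{\pi_1}(\mathcal{A})\|_p\le\|\mathrm{Unfold}_{\pi_2}(\mathcal{A})\|_p\le\frac{[\dim(\mathcal{A})]^{1-\frac1p}}{[\dim_{\mathcal{A}}(\pi_2,\pi_1)]^{1/2}}\|\mathrm{Unfold}_{\pi_1}(\mathcal{A})\|_p . \]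
   Context: $\dim(\mathcal{A})=\prod_{n=1}^k d_n$. For a real tensor $\mathcal{T}\in\mathbb{R}^{e_1\times\cdots\times e_m}$ and $1\le p\le\infty$, $\|\mathcal{T}\|_p=\sup\{\sum t_{i_1\dots i_m}x^{(1)}_{i_1}\cdots x^{(m)}_{i_m}:\ \mathbf{x}_n\in\mathbb{R}^{e_n},\ \|\mathbf{x}_n\|_p=1\}$ (the norm of the associated multilinear functional, with $\|\mathbf{x}_n\|_p$ the vector $l^p$-norm). $\mathcal{P}_{[k]}$ is the set of partitions of $[k]$. Unfolding: for $\pi=\{B_1,\dots,B_\ell\}\in\mathcal{P}_{[k]}$, $\mathrm{Unfold}_\pi(\mathcal{A})$ is the order-$\ell$ tensor of dimensions $(\prod_{j\in B_1}d_j,\dots,\prod_{j\in B_\ell}d_j)$ whose entry at $(m_1,\dots,m_\ell)$ is $a_{i_1\dots i_k}$, where $m_j$ corresponds to $(i_r)_{r\in B_j}$ under a fixed bijection $\prod_{r\in B_j}[d_r]\to[\prod_{r\in B_j}d_r]$. For $\pi_1,\pi_2\in\mathcal{P}_{[k]}$, $\dim_{\mathcal{A}}(\pi_1,\pi_2)=\prod_{B\in\pi_1}\max_{B'\in\pi_2}D_{\mathcal{A}}(B,B')$ with $D_{\mathcal{A}}(B,B')=\prod_{n\in B\cap B'}d_n$ if $B\cap B'\ne\emptyset$ and $0$ otherwise. *)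

theory Defs
  imports Complex_Main "HOL-Library.Disjoint_Sets" "HOL-Library.Extended_Real" "HOL-Library.FuncSet"
begin

text \<open>A tensor whose modes are indexed by a finite set M (of any type)
  with dimensions e j (j in M) is a function T from index functions to reals; the
  meaningful entries are those at idx in PiE M (%j. {..<e j}) (0-based indices).\<close>

definition inv_exp :: "ereal \<Rightarrow> real" where
  "inv_exp p = (if p = \<infinity> then 0 else 1 / real_of_ereal p)"

definition lpnorm :: "ereal \<Rightarrow> nat \<Rightarrow> (nat \<Rightarrow> real) \<Rightarrow> real" where
  "lpnorm p n v = (if p = \<infinity> then Max (insert 0 ((\<lambda>i. \<bar>v i\<bar>) ` {..<n}))
                   else (\<Sum>i<n. \<bar>v i\<bar> powr real_of_ereal p) powr (1 / real_of_ereal p))"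

definition tensor_pnorm :: "ereal \<Rightarrow> 'm set \<Rightarrow> ('m \<Rightarrow> nat) \<Rightarrow> (('m \<Rightarrow> nat) \<Rightarrow> real) \<Rightarrow> real" where
  "tensor_pnorm p M e T = Sup {(\<Sum>idx\<in>PiE M (\<lambda>j. {..<e j}). T idx * (\<Prod>j\<in>M. x j (idx j))) | x.
       \<forall>j\<in>M. lpnorm p (e j) (x j) = 1}"

text \<open>Fixed bijection {..<prod_{s in B} d s} -> prod_{r in B} {..<d r} (mixed radix, ascending r).\<close>
definition block_digit :: "(nat \<Rightarrow> nat) \<Rightarrow> nat set \<Rightarrow> nat \<Rightarrow> nat \<Rightarrow> nat" where
  "block_digit d B r m = (m div (\<Prod>s\<in>{s\<in>B. s < r}. d s)) mod d r"

text \<open>Unfolding of the order-k tensor A (modes 1..k, dims d) along partition pi.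
  The modes of the unfolded tensor are indexed by the blocks of pi themselves.\<close>
definition unfold :: "nat \<Rightarrow> (nat \<Rightarrow> nat) \<Rightarrow> nat set set \<Rightarrow> ((nat \<Rightarrow> nat) \<Rightarrow> real)
                      \<Rightarrow> ((nat set \<Rightarrow> nat) \<Rightarrow> real)" where
  "unfold k d \<pi> A = (\<lambda>m. A (\<lambda>r. if r \<in> {1..k}
        then (let B = (THE B. B \<in> \<pi> \<and> r \<in> B) in block_digit d B r (m B)) else undefined))"

definition unfold_dims :: "(nat \<Rightarrow> nat) \<Rightarrow> nat set \<Rightarrow> nat" where
  "unfold_dims d B = (\<Prod>r\<in>B. d r)"

definition unfold_norm :: "ereal \<Rightarrow> nat \<Rightarrow> (nat \<Rightarrow> nat) \<Rightarrow> nat set set \<Rightarrow> ((nat \<Rightarrow> nat) \<Rightarrow> real) \<Rightarrow> real" where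
  "unfold_norm p k d \<pi> A = tensor_pnorm p \<pi> (unfold_dims d) (unfold k d \<pi> A)"

definition tdim :: "nat \<Rightarrow> (nat \<Rightarrow> nat) \<Rightarrow> real" where
  "tdim k d = (\<Prod>n\<in>{1..k}. real (d n))"

definition Dblk :: "(nat \<Rightarrow> nat) \<Rightarrow> nat set \<Rightarrow> nat set \<Rightarrow> real" where
  "Dblk d B B' = (if B \<inter> B' \<noteq> {} then (\<Prod>n\<in>B \<inter> B'. real (d n)) else 0)"

definition dim_pair :: "(nat \<Rightarrow> nat) \<Rightarrow> nat set set \<Rightarrow> nat set set \<Rightarrow> real" where
  "dim_pair d \<pi>1 \<pi>2 = (\<Prod>B\<in>\<pi>1. Max ((\<lambda>B'. Dblk d B B') ` \<pi>2))"

end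

theory Submission
  imports Defs "HOL-Analysis.Convex"
begin

text \<open>For a single tensor T the p-norm is nondecreasing in p, and for p \<le> q the q-norm is at
  most (dim T)^(1/p - 1/q) times the p-norm, as for vector norms; so everything reduces to p = 2.
  For p = 2, fix unit vectors y_B for the blocks B of \<pi>1 and pair each B with a block
  \<beta>(B) of \<pi>2 of largest overlap; write R_B = B - \<beta>(B).  Freezing the indices on all R_B
  turns the \<pi>1-form of y into a \<pi>2-form of vectors whose norms factor over the blocks B.
  Summing over the frozen indices and applying Cauchy-Schwarz in each R_B gives
  \<parallel>Unfold_\<pi>1 A\<parallel>_2 \<le> (\<Prod>_B |R_B|)^(1/2) \<parallel>Unfold_\<pi>2 A\<parallel>_2, and \<Prod>_B |R_B| = dim A / dim_A(\<pi>1, \<pi>2).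
  The lower bounds are the upper bounds with \<pi>1 and \<pi>2 exchanged.\<close>

section \<open>Power sums and vector norms\<close>

lemma sum_powr_le_powr_sum:
  fixes w :: "'a \<Rightarrow> real"
  assumes "finite S" "\<And>i. i \<in> S \<Longrightarrow> w i \<ge> 0" "t \<ge> 1"
  shows "(\<Sum>i\<in>S. w i powr t) \<le> (\<Sum>i\<in>S. w i) powr t"
proof -
  let ?W = "\<Sum>i\<in>S. w i"
  have "(\<Sum>i\<in>S. w i powr t) \<le> (\<Sum>i\<in>S. w i * ?W powr (t - 1))"
  proof (rule sum_mono)
    fix i assume i: "i \<in> S"
    show "w i powr t \<le> w i * ?W powr (t - 1)"
    proof (cases "w i = 0")
      case False
      then have wp: "w i > 0" using assms i by force
      have "w i \<le> ?W" using assms i by (intro member_le_sum) auto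
      then have "w i powr (t - 1) \<le> ?W powr (t - 1)" using wp assms by (intro powr_mono2) auto
      moreover have "w i powr t = w i * w i powr (t - 1)"
        using powr_mult_base[OF less_imp_le[OF wp], of "t - 1"] by simp
      ultimately show ?thesis using wp by (simp add: mult_left_mono)
    qed simp
  qed
  also have "\<dots> = ?W * ?W powr (t - 1)" by (simp add: sum_distrib_right)
  also have "\<dots> = ?W powr t"
  proof (cases "?W = 0")
    case False
    then have "?W > 0" using assms by (simp add: sum_nonneg order_le_neq_trans)
    then show ?thesis using powr_mult_base[of ?W "t - 1"] by simp
  qed (use assms in simp)
  finally show ?thesis .
qed

lemma powr_sum_le_card_powr_sum_powr:
  fixes w :: "'a \<Rightarrow> real"
  assumes "finite S" "\<And>i. i \<in> S \<Longrightarrow> w i \<ge> 0" "t \<ge> 1"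
  shows "(\<Sum>i\<in>S. w i) powr t \<le> real (card S) powr (t - 1) * (\<Sum>i\<in>S. w i powr t)"
proof -
  define S' where "S' = {i\<in>S. w i > 0}"
  have fS': "finite S'" using assms unfolding S'_def by simp
  have sum1: "(\<Sum>i\<in>S. w i) = (\<Sum>i\<in>S'. w i)"
    unfolding S'_def using assms by (intro sum.mono_neutral_right) force+
  have sum2: "(\<Sum>i\<in>S. w i powr t) = (\<Sum>i\<in>S'. w i powr t)"
    unfolding S'_def using assms by (intro sum.mono_neutral_right) force+
  show ?thesis
  proof (cases "S' = {}")
    case True
    then show ?thesis using sum1 assms by (simp, intro mult_nonneg_nonneg sum_nonneg) auto
  next
    case False
    let ?m = "real (card S')"
    have m0: "?m > 0" using False fS' by (simp add: card_gt_0_iff)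
    have "(\<lambda>x. x powr t) (\<Sum>i\<in>S'. (1 / ?m) *\<^sub>R w i) \<le> (\<Sum>i\<in>S'. (1 / ?m) * (\<lambda>x. x powr t) (w i))"
      using fS' False powr_convex[OF assms(3)] m0
      by (intro convex_on_sum) (auto simp: S'_def)
    then have "((\<Sum>i\<in>S'. w i) / ?m) powr t \<le> (\<Sum>i\<in>S'. w i powr t) / ?m"
      by (simp add: sum_distrib_left[symmetric] sum_divide_distrib[symmetric])
    moreover have "((\<Sum>i\<in>S'. w i) / ?m) powr t = (\<Sum>i\<in>S'. w i) powr t / ?m powr t"
      using m0 by (intro powr_divide; auto intro: sum_nonneg simp: S'_def)
    ultimately have "(\<Sum>i\<in>S'. w i) powr t \<le> ?m powr t * ((\<Sum>i\<in>S'. w i powr t) / ?m)"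
      using m0 by (simp add: divide_le_eq mult.commute)
    also have "\<dots> = ?m powr (t - 1) * (\<Sum>i\<in>S'. w i powr t)"
      using m0 by (simp add: powr_diff)
    also have "\<dots> \<le> real (card S) powr (t - 1) * (\<Sum>i\<in>S'. w i powr t)"
    proof (rule mult_right_mono)
      have "card S' \<le> card S" unfolding S'_def using assms by (intro card_mono) auto
      then show "?m powr (t - 1) \<le> real (card S) powr (t - 1)" using m0 assms by (intro powr_mono2) auto
    qed (simp add: sum_nonneg)
    finally show ?thesis using sum1 sum2 by simp
  qed
qed

lemma real_sqrt_prod: "finite S \<Longrightarrow> sqrt (\<Prod>i\<in>S. f i) = (\<Prod>i\<in>S. sqrt (f i))"
  by (induction S rule: finite_induct) (auto simp: real_sqrt_mult)

lemma inv_exp_2 [simp]: "inv_exp 2 = 1/2" "inv_exp (ereal 2) = 1/2"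
  by (simp_all add: inv_exp_def)

lemma ereal_ge_1_cases:
  assumes "(1::ereal) \<le> p"
  obtains "p = \<infinity>" | P where "p = ereal P" "P \<ge> 1"
  using assms by (cases p) auto

lemma lpnorm_finite: "p \<noteq> \<infinity> \<Longrightarrow> lpnorm p n v = (\<Sum>i<n. \<bar>v i\<bar> powr real_of_ereal p) powr (1 / real_of_ereal p)"
  by (simp add: lpnorm_def)

lemma lpnorm_infinity: "lpnorm \<infinity> n v = Max (insert 0 ((\<lambda>i. \<bar>v i\<bar>) ` {..<n}))"
  by (simp add: lpnorm_def)

lemma lpnorm_2: "lpnorm 2 n v = sqrt (\<Sum>i<n. (v i)\<^sup>2)"
proof -
  have "\<And>i. \<bar>v i\<bar> powr 2 = (v i)\<^sup>2"
    by (subst powr_numeral) auto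
  then show ?thesis unfolding lpnorm_def by (simp add: powr_half_sqrt sum_nonneg)
qed

lemma lpnorm_nonneg: "lpnorm p n v \<ge> 0"
  by (auto simp: lpnorm_def Max_ge_iff)

lemma abs_le_lpnorm:
  assumes "1 \<le> p" "i < n"
  shows "\<bar>v i\<bar> \<le> lpnorm p n v"
  using assms(1)
proof (cases rule: ereal_ge_1_cases)
  case 1
  then show ?thesis using assms by (auto simp: lpnorm_infinity Max_ge_iff)
next
  case (2 P)
  have "\<bar>v i\<bar> powr P \<le> (\<Sum>i<n. \<bar>v i\<bar> powr P)"
    using assms by (intro member_le_sum) auto
  then have "(\<bar>v i\<bar> powr P) powr (1/P) \<le> (\<Sum>i<n. \<bar>v i\<bar> powr P) powr (1/P)"
    using 2 by (intro powr_mono2) auto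
  then show ?thesis using 2 by (simp add: lpnorm_finite powr_powr)
qed

lemma lpnorm_eq_0D: "1 \<le> p \<Longrightarrow> i < n \<Longrightarrow> lpnorm p n v = 0 \<Longrightarrow> v i = 0"
  using abs_le_lpnorm[of p i n v] by simp

lemma lpnorm_cmult:
  assumes "1 \<le> p"
  shows "lpnorm p n (\<lambda>i. c * v i) = \<bar>c\<bar> * lpnorm p n v"
  using assms
proof (cases rule: ereal_ge_1_cases)
  case 1
  have "mono ((*) \<bar>c\<bar>)" by (auto simp: mono_def mult_left_mono)
  then have "\<bar>c\<bar> * Max (insert 0 ((\<lambda>i. \<bar>v i\<bar>) ` {..<n})) = Max ((*) \<bar>c\<bar> ` insert 0 ((\<lambda>i. \<bar>v i\<bar>) ` {..<n}))"
    by (intro mono_Max_commute) auto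
  also have "(*) \<bar>c\<bar> ` insert 0 ((\<lambda>i. \<bar>v i\<bar>) ` {..<n}) = insert 0 ((\<lambda>i. \<bar>c * v i\<bar>) ` {..<n})"
    by (auto simp: abs_mult image_image)
  finally show ?thesis using 1 by (simp add: lpnorm_infinity)
next
  case (2 P)
  have "(\<Sum>i<n. \<bar>c * v i\<bar> powr P) = \<bar>c\<bar> powr P * (\<Sum>i<n. \<bar>v i\<bar> powr P)"
    by (simp add: abs_mult powr_mult sum_distrib_left)
  then have "(\<Sum>i<n. \<bar>c * v i\<bar> powr P) powr (1/P) = (\<bar>c\<bar> powr P) powr (1/P) * (\<Sum>i<n. \<bar>v i\<bar> powr P) powr (1/P)"
    by (simp add: powr_mult sum_nonneg)
  also have "(\<bar>c\<bar> powr P) powr (1/P) = \<bar>c\<bar>" using 2 by (simp add: powr_powr)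
  finally show ?thesis using 2 by (simp add: lpnorm_finite)
qed

lemma lpnorm_unit_vector:
  assumes "1 \<le> p" "n \<ge> 1"
  shows "lpnorm p n (\<lambda>i. if i = 0 then 1 else 0) = 1"
  using assms(1)
proof (cases rule: ereal_ge_1_cases)
  case 1
  have "insert 0 ((\<lambda>i. \<bar>if i = 0 then 1 else 0\<bar>) ` {..<n}) = {0, 1::real}"
    using assms(2) by (auto simp: image_iff intro!: bexI[of _ 0] bexI[of _ "0::nat"])
  then show ?thesis using 1 by (simp add: lpnorm_infinity)
next
  case (2 P)
  have "(\<Sum>i<n. \<bar>if i = 0 then 1 else 0::real\<bar> powr P) = (\<Sum>i<n. if i = 0 then 1 else 0)"
    by (intro sum.cong) auto
  also have "\<dots> = 1" using assms(2) by (simp add: sum.delta)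
  finally show ?thesis using 2 by (simp add: lpnorm_finite)
qed

lemma lpnorm_antimono_exponent:
  assumes "1 \<le> p" "p \<le> q"
  shows "lpnorm q n v \<le> lpnorm p n v"
  using assms(1)
proof (cases rule: ereal_ge_1_cases)
  case (2 P)
  from order_trans[OF assms] show ?thesis
  proof (cases rule: ereal_ge_1_cases)
    case 1
    then show ?thesis using abs_le_lpnorm[OF assms(1), of _ n v] lpnorm_nonneg[of p n v]
      by (auto simp: lpnorm_infinity Max_le_iff)
  next
    case (2 Q)
    have "P \<le> Q" using assms \<open>p = ereal P\<close> 2 by simp
    then have "(\<Sum>i<n. (\<bar>v i\<bar> powr P) powr (Q/P)) \<le> (\<Sum>i<n. \<bar>v i\<bar> powr P) powr (Q/P)"
      using \<open>P \<ge> 1\<close> by (intro sum_powr_le_powr_sum) auto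
    then have "(\<Sum>i<n. \<bar>v i\<bar> powr Q) powr (1/Q) \<le> ((\<Sum>i<n. \<bar>v i\<bar> powr P) powr (Q/P)) powr (1/Q)"
      using 2 \<open>P \<ge> 1\<close> by (intro powr_mono2) (auto simp: powr_powr intro: sum_nonneg)
    also have "\<dots> = (\<Sum>i<n. \<bar>v i\<bar> powr P) powr (1/P)"
      using \<open>P \<ge> 1\<close> 2 by (simp add: powr_powr)
    finally show ?thesis using \<open>p = ereal P\<close> 2 by (simp add: lpnorm_finite)
  qed
qed (use assms in simp)

lemma lpnorm_le_powr_lpnorm:
  assumes "1 \<le> p" "p \<le> q" "n \<ge> 1"
  shows "lpnorm p n v \<le> real n powr (inv_exp p - inv_exp q) * lpnorm q n v"
  using assms(1)
proof (cases rule: ereal_ge_1_cases)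
  case (2 P)
  from order_trans[OF assms(1,2)] show ?thesis
  proof (cases rule: ereal_ge_1_cases)
    case 1
    define m where "m = lpnorm q n v"
    have "\<And>i. i < n \<Longrightarrow> \<bar>v i\<bar> \<le> m" unfolding m_def using 1 by (auto simp: lpnorm_infinity Max_ge_iff)
    then have "(\<Sum>i<n. \<bar>v i\<bar> powr P) \<le> (\<Sum>i<n. m powr P)"
      using 2 by (intro sum_mono powr_mono2) auto
    then have "(\<Sum>i<n. \<bar>v i\<bar> powr P) powr (1/P) \<le> (real n * m powr P) powr (1/P)"
      using 2 by (intro powr_mono2) (auto intro: sum_nonneg)
    also have "\<dots> = real n powr (1/P) * m"
      using 2 lpnorm_nonneg[of q n v] by (simp add: m_def powr_mult powr_powr)
    finally show ?thesis using 1 2 by (simp add: lpnorm_finite inv_exp_def m_def)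
  next
    case (2 Q)
    have "P \<le> Q" using assms \<open>p = ereal P\<close> 2 by simp
    then have "(\<Sum>i<n. \<bar>v i\<bar> powr P) powr (Q/P) \<le> real (card {..<n}) powr (Q/P - 1) * (\<Sum>i<n. (\<bar>v i\<bar> powr P) powr (Q/P))"
      using \<open>P \<ge> 1\<close> by (intro powr_sum_le_card_powr_sum_powr) auto
    then have "((\<Sum>i<n. \<bar>v i\<bar> powr P) powr (Q/P)) powr (1/Q) \<le> (real n powr (Q/P - 1) * (\<Sum>i<n. \<bar>v i\<bar> powr Q)) powr (1/Q)"
      using \<open>P \<ge> 1\<close> 2 by (intro powr_mono2) (auto simp: powr_powr intro: sum_nonneg)
    also have "\<dots> = real n powr ((Q/P - 1) / Q) * (\<Sum>i<n. \<bar>v i\<bar> powr Q) powr (1/Q)"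
      using 2 by (simp add: powr_mult powr_powr sum_nonneg)
    also have "(Q/P - 1) / Q = 1/P - 1/Q" using \<open>P \<ge> 1\<close> 2 by (simp add: field_simps)
    finally show ?thesis using \<open>p = ereal P\<close> \<open>P \<ge> 1\<close> 2 by (simp add: lpnorm_finite inv_exp_def powr_powr)
  qed
qed (use assms in \<open>simp add: inv_exp_def\<close>)

section \<open>The p-norm of a tensor\<close>

definition mlform :: "'m set \<Rightarrow> ('m \<Rightarrow> nat) \<Rightarrow> (('m \<Rightarrow> nat) \<Rightarrow> real) \<Rightarrow> ('m \<Rightarrow> nat \<Rightarrow> real) \<Rightarrow> real" where
  "mlform M e T x = (\<Sum>idx\<in>PiE M (\<lambda>j. {..<e j}). T idx * (\<Prod>j\<in>M. x j (idx j)))"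

lemma tensor_pnorm_eq_Sup_mlform:
  "tensor_pnorm p M e T = Sup {mlform M e T x | x. \<forall>j\<in>M. lpnorm p (e j) (x j) = 1}"
  by (simp add: tensor_pnorm_def mlform_def)

lemma mlform_cmult: "mlform M e T (\<lambda>j i. c j * x j i) = (\<Prod>j\<in>M. c j) * mlform M e T x"
  unfolding mlform_def by (simp add: prod.distrib sum_distrib_left algebra_simps)

lemma mlform_empty_modes: "mlform {} e T x = T (\<lambda>_. undefined)"
  by (simp add: mlform_def)

lemma tensor_pnorm_empty_modes: "tensor_pnorm p {} e T = T (\<lambda>_. undefined)"
  by (simp add: tensor_pnorm_def)

locale tensor_shape =
  fixes p :: ereal and M :: "'m set" and e :: "'m \<Rightarrow> nat"
  assumes finite_modes: "finite M" and dims_ge_1: "\<And>j. j \<in> M \<Longrightarrow> e j \<ge> 1" and exponent_ge_1: "1 \<le> p"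
begin

abbreviation normed :: "('m \<Rightarrow> nat \<Rightarrow> real) \<Rightarrow> bool" where
  "normed x \<equiv> \<forall>j\<in>M. lpnorm p (e j) (x j) = 1"

lemma abs_mlform_le:
  assumes "normed x"
  shows "\<bar>mlform M e T x\<bar> \<le> (\<Sum>idx\<in>PiE M (\<lambda>j. {..<e j}). \<bar>T idx\<bar>)"
  unfolding mlform_def
proof (rule order_trans[OF sum_abs], rule sum_mono)
  fix idx assume idx: "idx \<in> PiE M (\<lambda>j. {..<e j})"
  have "\<bar>\<Prod>j\<in>M. x j (idx j)\<bar> \<le> 1"
    unfolding abs_prod
  proof (rule prod_le_1)
    fix j assume "j \<in> M"
    then show "0 \<le> \<bar>x j (idx j)\<bar> \<and> \<bar>x j (idx j)\<bar> \<le> 1"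
      using abs_le_lpnorm[OF exponent_ge_1, of "idx j" "e j" "x j"] assms idx by (auto simp: PiE_iff)
  qed
  then show "\<bar>T idx * (\<Prod>j\<in>M. x j (idx j))\<bar> \<le> \<bar>T idx\<bar>"
    by (simp add: abs_mult mult_left_le)
qed

lemma bdd_above_mlform: "bdd_above {mlform M e T x | x. normed x}"
  using abs_mlform_le by (intro bdd_aboveI) (force simp: abs_le_iff)

lemma normed_unit_vectors: "normed (\<lambda>j i. if i = 0 then 1 else 0)"
  using lpnorm_unit_vector[OF exponent_ge_1] dims_ge_1 by blast

lemma mlform_le_tensor_pnorm: "normed x \<Longrightarrow> mlform M e T x \<le> tensor_pnorm p M e T"
  unfolding tensor_pnorm_eq_Sup_mlform by (rule cSup_upper[OF _ bdd_above_mlform]) blast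

lemma tensor_pnorm_le:
  assumes "\<And>x. normed x \<Longrightarrow> mlform M e T x \<le> c"
  shows "tensor_pnorm p M e T \<le> c"
  unfolding tensor_pnorm_eq_Sup_mlform
  using normed_unit_vectors assms by (intro cSup_least) auto

text \<open>Flipping the sign of one vector flips the sign of the form, so the supremum is
  nonnegative as soon as there is a mode.\<close>

lemma tensor_pnorm_nonneg:
  assumes "j0 \<in> M"
  shows "tensor_pnorm p M e T \<ge> 0"
proof -
  define x where "x = (\<lambda>(j::'m) (i::nat). if i = 0 then 1 else (0::real))"
  define c where "c = (\<lambda>j. if j = j0 then -1 else (1::real))"
  have "normed (\<lambda>j i. c j * x j i)"
    using normed_unit_vectors lpnorm_cmult[OF exponent_ge_1] by (auto simp: c_def x_def)
  moreover have "(\<Prod>j\<in>M. c j) = -1"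
    using assms finite_modes by (simp add: c_def prod.If_cases Int_absorb1)
  ultimately show ?thesis
    using mlform_le_tensor_pnorm[of x T] mlform_le_tensor_pnorm[of "\<lambda>j i. c j * x j i" T]
      normed_unit_vectors by (simp add: mlform_cmult x_def)
qed

lemma mlform_le_tensor_pnorm_mult:
  "mlform M e T x \<le> tensor_pnorm p M e T * (\<Prod>j\<in>M. lpnorm p (e j) (x j))"
proof (cases "\<exists>j0\<in>M. lpnorm p (e j0) (x j0) = 0")
  case True
  then obtain j0 where j0: "j0 \<in> M" "lpnorm p (e j0) (x j0) = 0" by blast
  have "mlform M e T x = 0" unfolding mlform_def
  proof (intro sum.neutral ballI)
    fix idx assume "idx \<in> PiE M (\<lambda>j. {..<e j})"
    then have "x j0 (idx j0) = 0" using lpnorm_eq_0D[OF exponent_ge_1 _ j0(2)] j0(1) by (auto simp: PiE_iff)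
    then show "T idx * (\<Prod>j\<in>M. x j (idx j)) = 0" using finite_modes j0(1) by (simp add: prod_zero_iff) blast
  qed
  then show ?thesis using tensor_pnorm_nonneg[OF j0(1)] by (simp add: prod_nonneg lpnorm_nonneg)
next
  case False
  define \<nu> where "\<nu> = (\<lambda>j. lpnorm p (e j) (x j))"
  have \<nu>_pos: "\<And>j. j \<in> M \<Longrightarrow> \<nu> j > 0" using False lpnorm_nonneg unfolding \<nu>_def
    by (metis less_eq_real_def)
  define x' where "x' = (\<lambda>j i. (1 / \<nu> j) * x j i)"
  have "normed x'"
  proof
    fix j assume "j \<in> M"
    have "lpnorm p (e j) (x' j) = \<bar>1 / \<nu> j\<bar> * \<nu> j"
      unfolding x'_def \<nu>_def by (rule lpnorm_cmult[OF exponent_ge_1])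
    then show "lpnorm p (e j) (x' j) = 1" using \<nu>_pos[OF \<open>j \<in> M\<close>] by simp
  qed
  have "mlform M e T x = mlform M e T (\<lambda>j i. \<nu> j * x' j i)"
    unfolding mlform_def x'_def using \<nu>_pos
    by (intro sum.cong refl arg_cong2[where f="(*)"] prod.cong) (simp_all add: less_imp_neq[symmetric])
  also have "\<dots> = (\<Prod>j\<in>M. \<nu> j) * mlform M e T x'" by (rule mlform_cmult)
  also have "\<dots> \<le> (\<Prod>j\<in>M. \<nu> j) * tensor_pnorm p M e T"
    using mlform_le_tensor_pnorm[OF \<open>normed x'\<close>] \<nu>_pos by (intro mult_left_mono prod_nonneg) (auto simp: less_imp_le)
  finally show ?thesis by (simp add: \<nu>_def mult.commute)
qed

end

lemma tensor_pnorm_mono_exponent: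
  assumes "finite M" "\<And>j. j \<in> M \<Longrightarrow> e j \<ge> 1" "1 \<le> p" "p \<le> q"
  shows "tensor_pnorm p M e T \<le> tensor_pnorm q M e T"
proof -
  interpret P: tensor_shape p M e using assms by unfold_locales
  interpret Q: tensor_shape q M e using assms by unfold_locales auto
  show ?thesis
  proof (rule P.tensor_pnorm_le)
    fix x assume x: "P.normed x"
    show "mlform M e T x \<le> tensor_pnorm q M e T"
    proof (cases "M = {}")
      case False
      then obtain j0 where "j0 \<in> M" by blast
      have "mlform M e T x \<le> tensor_pnorm q M e T * (\<Prod>j\<in>M. lpnorm q (e j) (x j))"
        by (rule Q.mlform_le_tensor_pnorm_mult)
      also have "\<dots> \<le> tensor_pnorm q M e T * 1"
      proof (rule mult_left_mono[OF prod_le_1 Q.tensor_pnorm_nonneg[OF \<open>j0 \<in> M\<close>]])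
        fix j assume "j \<in> M"
        then show "0 \<le> lpnorm q (e j) (x j) \<and> lpnorm q (e j) (x j) \<le> 1"
          using lpnorm_antimono_exponent[OF assms(3,4), of "e j" "x j"] x lpnorm_nonneg by auto
      qed
      finally show ?thesis by simp
    qed (simp add: mlform_empty_modes tensor_pnorm_empty_modes)
  qed
qed

lemma tensor_pnorm_le_powr_tensor_pnorm:
  assumes "finite M" "\<And>j. j \<in> M \<Longrightarrow> e j \<ge> 1" "1 \<le> p" "p \<le> q"
  shows "tensor_pnorm q M e T \<le> real (\<Prod>j\<in>M. e j) powr (inv_exp p - inv_exp q) * tensor_pnorm p M e T"
proof -
  interpret P: tensor_shape p M e using assms by unfold_locales
  interpret Q: tensor_shape q M e using assms by unfold_locales auto
  show ?thesis
  proof (rule Q.tensor_pnorm_le)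
    fix x assume x: "Q.normed x"
    show "mlform M e T x \<le> real (\<Prod>j\<in>M. e j) powr (inv_exp p - inv_exp q) * tensor_pnorm p M e T"
    proof (cases "M = {}")
      case False
      then obtain j0 where "j0 \<in> M" by blast
      have "mlform M e T x \<le> tensor_pnorm p M e T * (\<Prod>j\<in>M. lpnorm p (e j) (x j))"
        by (rule P.mlform_le_tensor_pnorm_mult)
      also have "\<dots> \<le> tensor_pnorm p M e T * (\<Prod>j\<in>M. real (e j) powr (inv_exp p - inv_exp q))"
      proof (rule mult_left_mono[OF prod_mono P.tensor_pnorm_nonneg[OF \<open>j0 \<in> M\<close>]])
        fix j assume "j \<in> M"
        then show "0 \<le> lpnorm p (e j) (x j) \<and> lpnorm p (e j) (x j) \<le> real (e j) powr (inv_exp p - inv_exp q)"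
          using lpnorm_le_powr_lpnorm[OF assms(3,4), of "e j" "x j"] x lpnorm_nonneg assms(2) by auto
      qed
      finally show ?thesis by (simp add: prod_powr_distrib mult.commute)
    qed (simp add: mlform_empty_modes tensor_pnorm_empty_modes)
  qed
qed

section \<open>Multi-indices and mixed-radix numbering of blocks\<close>

definition multi_idx :: "(nat \<Rightarrow> nat) \<Rightarrow> nat set \<Rightarrow> (nat \<Rightarrow> nat) set" where
  "multi_idx d X = PiE X (\<lambda>n. {..<d n})"

definition block_idx :: "(nat \<Rightarrow> nat) \<Rightarrow> nat set \<Rightarrow> nat \<Rightarrow> (nat \<Rightarrow> nat)" where
  "block_idx d B a = restrict (\<lambda>r. block_digit d B r a) B"

definition block_pos :: "(nat \<Rightarrow> nat) \<Rightarrow> nat set \<Rightarrow> (nat \<Rightarrow> nat) \<Rightarrow> nat" where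
  "block_pos d B = the_inv_into {..<unfold_dims d B} (block_idx d B)"

lemma finite_multi_idx: "finite X \<Longrightarrow> finite (multi_idx d X)"
  unfolding multi_idx_def by (intro finite_PiE) auto

lemma card_multi_idx: "finite X \<Longrightarrow> card (multi_idx d X) = (\<Prod>n\<in>X. d n)"
  unfolding multi_idx_def by (simp add: card_PiE)

lemma restrict_in_multi_idx: "j \<in> multi_idx d Y \<Longrightarrow> X \<subseteq> Y \<Longrightarrow> restrict j X \<in> multi_idx d X"
  unfolding multi_idx_def by (auto simp: PiE_iff)

lemma block_digit_inj:
  assumes "finite B" "\<forall>r\<in>B. d r \<ge> 1" "a < (\<Prod>s\<in>B. d s)" "b < (\<Prod>s\<in>B. d s)"
    and "\<forall>r\<in>B. block_digit d B r a = block_digit d B r b"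
  shows "a = b"
  using assms
proof (induction B arbitrary: a b rule: finite_linorder_min_induct)
  case (insert x B)
  have prod: "(\<Prod>s\<in>insert x B. d s) = d x * (\<Prod>s\<in>B. d s)" using insert.hyps by auto
  have digit_B: "block_digit d (insert x B) r m = block_digit d B r (m div d x)" if "r \<in> B" for r m
  proof -
    have "{s \<in> insert x B. s < r} = insert x {s\<in>B. s < r}" using insert.hyps that by auto
    then have "(\<Prod>s\<in>{s \<in> insert x B. s < r}. d s) = d x * (\<Prod>s\<in>{s\<in>B. s < r}. d s)"
      using insert.hyps by auto
    then show ?thesis unfolding block_digit_def by (simp add: div_mult2_eq)
  qed
  have digit_x: "block_digit d (insert x B) x m = m mod d x" for m
  proof -
    have "{s \<in> insert x B. s < x} = {}" using insert.hyps by auto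
    then show ?thesis unfolding block_digit_def by (simp only:) simp
  qed
  have "a div d x = b div d x"
    using insert.IH[of "a div d x" "b div d x"] insert.prems digit_B prod
    by (auto simp: less_mult_imp_div_less mult.commute)
  moreover have "a mod d x = b mod d x" using insert.prems(4) digit_x by auto
  ultimately show ?case by (metis div_mult_mod_eq)
qed simp

lemma bij_betw_block_idx:
  assumes "finite B" "\<forall>r\<in>B. d r \<ge> 1"
  shows "bij_betw (block_idx d B) {..<unfold_dims d B} (multi_idx d B)"
proof -
  have inj: "inj_on (block_idx d B) {..<unfold_dims d B}"
  proof (rule inj_onI)
    fix a b assume ab: "a \<in> {..<unfold_dims d B}" "b \<in> {..<unfold_dims d B}"
      and eq: "block_idx d B a = block_idx d B b"
    have "\<forall>r\<in>B. block_digit d B r a = block_digit d B r b"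
    proof
      fix r assume "r \<in> B"
      then show "block_digit d B r a = block_digit d B r b" using fun_cong[OF eq, of r] by (simp add: block_idx_def)
    qed
    then show "a = b" using block_digit_inj[OF assms, of a b] ab by (simp add: unfold_dims_def)
  qed
  have "block_idx d B ` {..<unfold_dims d B} \<subseteq> multi_idx d B"
    using assms(2) by (auto simp: multi_idx_def block_idx_def block_digit_def intro!: mod_less_divisor)
  moreover have "card (block_idx d B ` {..<unfold_dims d B}) = card (multi_idx d B)"
    using card_image[OF inj] card_multi_idx[OF assms(1)] by (simp add: unfold_dims_def)
  ultimately have "block_idx d B ` {..<unfold_dims d B} = multi_idx d B"
    using card_subset_eq[OF finite_multi_idx[OF assms(1)]] by blast
  then show ?thesis using inj by (simp add: bij_betw_def)
qed

lemma block_pos_block_idx: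
  "finite B \<Longrightarrow> \<forall>r\<in>B. d r \<ge> 1 \<Longrightarrow> a < unfold_dims d B \<Longrightarrow> block_pos d B (block_idx d B a) = a"
  unfolding block_pos_def using bij_betw_block_idx by (simp add: bij_betw_def the_inv_into_f_f)

lemma block_idx_block_pos:
  "finite B \<Longrightarrow> \<forall>r\<in>B. d r \<ge> 1 \<Longrightarrow> j \<in> multi_idx d B \<Longrightarrow> block_idx d B (block_pos d B j) = j"
  unfolding block_pos_def using bij_betw_block_idx by (simp add: bij_betw_def f_the_inv_into_f)

lemma block_pos_less:
  assumes "finite B" "\<forall>r\<in>B. d r \<ge> 1" "j \<in> multi_idx d B"
  shows "block_pos d B j < unfold_dims d B"
  using the_inv_into_into[of "block_idx d B" "{..<unfold_dims d B}" j] bij_betw_block_idx[OF assms(1,2)] assms(3)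
  by (auto simp: block_pos_def bij_betw_def)

lemma sum_multi_idx_Un:
  assumes "X \<inter> Y = {}"
  shows "(\<Sum>j\<in>multi_idx d (X \<union> Y). h j)
       = (\<Sum>a\<in>multi_idx d X. \<Sum>b\<in>multi_idx d Y. h (restrict (\<lambda>n. if n \<in> X then a n else b n) (X \<union> Y)))"
proof -
  let ?glue = "\<lambda>a b. restrict (\<lambda>n. if n \<in> X then a n else b n) (X \<union> Y)"
  have "(\<Sum>a\<in>multi_idx d X. \<Sum>b\<in>multi_idx d Y. h (?glue a b))
      = (\<Sum>(a, b)\<in>multi_idx d X \<times> multi_idx d Y. h (?glue a b))"
    by (rule sum.cartesian_product)
  also have "\<dots> = (\<Sum>j\<in>multi_idx d (X \<union> Y). h j)"
  proof (rule sum.reindex_bij_witness[where i="\<lambda>j. (restrict j X, restrict j Y)" and j="case_prod ?glue"])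
    fix ab assume "ab \<in> multi_idx d X \<times> multi_idx d Y"
    then obtain a b where ab: "ab = (a, b)" "a \<in> multi_idx d X" "b \<in> multi_idx d Y" by auto
    have "restrict (?glue a b) X = a"
      using ab unfolding multi_idx_def by (auto simp: PiE_iff extensional_def)
    moreover have "restrict (?glue a b) Y = b"
    proof
      fix n show "restrict (?glue a b) Y n = b n"
        using ab assms unfolding multi_idx_def by (cases "n \<in> Y") (auto simp: PiE_iff extensional_def)
    qed
    ultimately show "(restrict (case_prod ?glue ab) X, restrict (case_prod ?glue ab) Y) = ab" using ab(1) by simp
    show "case_prod ?glue ab \<in> multi_idx d (X \<union> Y)"
      using ab unfolding multi_idx_def by (auto simp: PiE_iff)
  next
    fix j assume "j \<in> multi_idx d (X \<union> Y)"
    then show "case_prod ?glue (restrict j X, restrict j Y) = j"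
      and "(restrict j X, restrict j Y) \<in> multi_idx d X \<times> multi_idx d Y"
      using restrict_in_multi_idx unfolding multi_idx_def by (auto simp: PiE_iff extensional_def)
  qed (simp add: case_prod_unfold)
  finally show ?thesis by simp
qed

lemma sum_multi_idx_UNION_prod:
  fixes g :: "'k \<Rightarrow> (nat \<Rightarrow> nat) \<Rightarrow> real"
  assumes "finite K" "\<forall>\<kappa>\<in>K. \<forall>\<kappa>'\<in>K. \<kappa> \<noteq> \<kappa>' \<longrightarrow> X \<kappa> \<inter> X \<kappa>' = {}"
  shows "(\<Sum>j\<in>multi_idx d (\<Union>\<kappa>\<in>K. X \<kappa>). \<Prod>\<kappa>\<in>K. g \<kappa> (restrict j (X \<kappa>)))
       = (\<Prod>\<kappa>\<in>K. \<Sum>a\<in>multi_idx d (X \<kappa>). g \<kappa> a)"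
  using assms
proof (induction K rule: finite_induct)
  case empty
  then show ?case by (simp add: multi_idx_def)
next
  case (insert \<kappa> K)
  let ?U = "\<Union>\<kappa>'\<in>K. X \<kappa>'"
  let ?glue = "\<lambda>a b. restrict (\<lambda>n. if n \<in> X \<kappa> then a n else b n) (X \<kappa> \<union> ?U)"
  have disj: "X \<kappa> \<inter> ?U = {}" using insert.prems insert.hyps(2) by fastforce
  have "(\<Sum>j\<in>multi_idx d (X \<kappa> \<union> ?U). \<Prod>\<kappa>'\<in>insert \<kappa> K. g \<kappa>' (restrict j (X \<kappa>')))
     = (\<Sum>a\<in>multi_idx d (X \<kappa>). \<Sum>b\<in>multi_idx d ?U. \<Prod>\<kappa>'\<in>insert \<kappa> K. g \<kappa>' (restrict (?glue a b) (X \<kappa>')))"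
    by (rule sum_multi_idx_Un[OF disj])
  also have "\<dots> = (\<Sum>a\<in>multi_idx d (X \<kappa>). \<Sum>b\<in>multi_idx d ?U. g \<kappa> a * (\<Prod>\<kappa>'\<in>K. g \<kappa>' (restrict b (X \<kappa>'))))"
  proof (intro sum.cong refl)
    fix a b assume a: "a \<in> multi_idx d (X \<kappa>)"
    have "restrict (?glue a b) (X \<kappa>) = a"
      using a unfolding multi_idx_def by (auto simp: PiE_iff extensional_def)
    moreover have "restrict (?glue a b) (X \<kappa>') = restrict b (X \<kappa>')" if "\<kappa>' \<in> K" for \<kappa>'
      using that disj by (intro restrict_ext) auto
    ultimately show "(\<Prod>\<kappa>'\<in>insert \<kappa> K. g \<kappa>' (restrict (?glue a b) (X \<kappa>')))
        = g \<kappa> a * (\<Prod>\<kappa>'\<in>K. g \<kappa>' (restrict b (X \<kappa>')))"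
      using insert.hyps by simp
  qed
  also have "\<dots> = (\<Sum>a\<in>multi_idx d (X \<kappa>). g \<kappa> a) * (\<Sum>b\<in>multi_idx d ?U. \<Prod>\<kappa>'\<in>K. g \<kappa>' (restrict b (X \<kappa>')))"
    by (rule sum_product[symmetric])
  also have "(\<Sum>b\<in>multi_idx d ?U. \<Prod>\<kappa>'\<in>K. g \<kappa>' (restrict b (X \<kappa>'))) = (\<Prod>\<kappa>'\<in>K. \<Sum>a\<in>multi_idx d (X \<kappa>'). g \<kappa>' a)"
    using insert by (intro insert.IH) auto
  finally show ?case using insert.hyps by simp
qed

section \<open>Unfoldings along a partition\<close>

locale partition_shape =
  fixes k :: nat and d :: "nat \<Rightarrow> nat" and \<pi> :: "nat set set"
  assumes dims_ge_1: "\<forall>n\<in>{1..k}. d n \<ge> 1" and partition: "partition_on {1..k} \<pi>"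
begin

lemma finite_blocks: "finite \<pi>"
  by (rule finite_UnionD) (simp add: partition_onD1[OF partition, symmetric])

lemma block_subset: "B \<in> \<pi> \<Longrightarrow> B \<subseteq> {1..k}"
  using partition_onD1[OF partition] by auto

lemma finite_block: "B \<in> \<pi> \<Longrightarrow> finite B"
  using block_subset finite_subset by blast

lemma block_dims_ge_1: "B \<in> \<pi> \<Longrightarrow> \<forall>r\<in>B. d r \<ge> 1"
  using block_subset dims_ge_1 by blast

lemma block_unique: "B \<in> \<pi> \<Longrightarrow> B' \<in> \<pi> \<Longrightarrow> r \<in> B \<Longrightarrow> r \<in> B' \<Longrightarrow> B = B'"
  using disjointD[OF partition_onD2[OF partition], of B B'] by auto

lemma the_block: "B \<in> \<pi> \<Longrightarrow> r \<in> B \<Longrightarrow> (THE B'. B' \<in> \<pi> \<and> r \<in> B') = B"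
  using block_unique by (intro the_equality) auto

lemma ex_block: "r \<in> {1..k} \<Longrightarrow> \<exists>B\<in>\<pi>. r \<in> B"
  using partition_onD1[OF partition] by auto

lemma dims_pos: "n \<in> {1..k} \<Longrightarrow> real (d n) > 0"
  using dims_ge_1 by fastforce

lemma tdim_pos: "tdim k d > 0"
  unfolding tdim_def using dims_pos by (intro prod_pos) auto

lemma prod_unfold_dims: "real (\<Prod>B\<in>\<pi>. unfold_dims d B) = tdim k d"
proof -
  have "(\<Prod>B\<in>\<pi>. unfold_dims d B) = (\<Prod>n\<in>\<Union>\<pi>. d n)"
    unfolding unfold_dims_def using finite_block block_unique by (subst prod.Union_disjoint) auto
  then show ?thesis by (simp add: tdim_def partition_onD1[OF partition, symmetric])
qed

lemma unfold_dims_ge_1: "B \<in> \<pi> \<Longrightarrow> unfold_dims d B \<ge> 1"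
  unfolding unfold_dims_def using block_dims_ge_1 by (intro prod_ge_1) auto

lemma tensor_shape_unfold: "1 \<le> p \<Longrightarrow> tensor_shape p \<pi> (unfold_dims d)"
  using finite_blocks unfold_dims_ge_1 by unfold_locales

lemma unfold_norm_mono_exponent:
  "1 \<le> p \<Longrightarrow> p \<le> q \<Longrightarrow> unfold_norm p k d \<pi> A \<le> unfold_norm q k d \<pi> A"
  unfolding unfold_norm_def by (rule tensor_pnorm_mono_exponent[OF finite_blocks unfold_dims_ge_1])

lemma unfold_norm_le_powr_unfold_norm:
  "1 \<le> p \<Longrightarrow> p \<le> q \<Longrightarrow>
    unfold_norm q k d \<pi> A \<le> tdim k d powr (inv_exp p - inv_exp q) * unfold_norm p k d \<pi> A"
  unfolding unfold_norm_def prod_unfold_dims[symmetric]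
  by (rule tensor_pnorm_le_powr_tensor_pnorm[OF finite_blocks unfold_dims_ge_1])

lemma unfold_norm_nonneg: "1 \<le> p \<Longrightarrow> k \<ge> 1 \<Longrightarrow> unfold_norm p k d \<pi> A \<ge> 0"
  using ex_block[of 1] tensor_shape.tensor_pnorm_nonneg[OF tensor_shape_unfold] unfolding unfold_norm_def by auto

definition unfold_idx :: "(nat set \<Rightarrow> nat) \<Rightarrow> (nat \<Rightarrow> nat)" where
  "unfold_idx m = (\<lambda>r. if r \<in> {1..k} then (let B = (THE B. B \<in> \<pi> \<and> r \<in> B) in block_digit d B r (m B)) else undefined)"

lemma unfold_eq: "unfold k d \<pi> A m = A (unfold_idx m)"
  by (simp add: unfold_def unfold_idx_def)

lemma restrict_unfold_idx:
  assumes "B \<in> \<pi>"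
  shows "restrict (unfold_idx m) B = block_idx d B (m B)"
  unfolding block_idx_def
proof (rule restrict_ext)
  fix r assume "r \<in> B"
  then have "r \<in> {1..k}" using block_subset[OF assms] by blast
  then show "unfold_idx m r = block_digit d B r (m B)" by (simp add: unfold_idx_def the_block[OF assms \<open>r \<in> B\<close>])
qed

lemma unfold_idx_at: "B \<in> \<pi> \<Longrightarrow> r \<in> B \<Longrightarrow> unfold_idx m r = block_idx d B (m B) r"
  using fun_cong[OF restrict_unfold_idx, of B m r] by simp

lemma inj_on_unfold_idx: "inj_on unfold_idx (PiE \<pi> (\<lambda>B. {..<unfold_dims d B}))"
proof (rule inj_onI)
  fix m m' assume m: "m \<in> PiE \<pi> (\<lambda>B. {..<unfold_dims d B})" and m': "m' \<in> PiE \<pi> (\<lambda>B. {..<unfold_dims d B})"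
    and eq: "unfold_idx m = unfold_idx m'"
  show "m = m'"
  proof (rule PiE_ext[OF m m'])
    fix B assume B: "B \<in> \<pi>"
    have "block_idx d B (m B) = block_idx d B (m' B)"
      using restrict_unfold_idx[OF B, of m] restrict_unfold_idx[OF B, of m'] eq by simp
    then show "m B = m' B"
      using block_pos_block_idx[OF finite_block[OF B] block_dims_ge_1[OF B]] m m' B by (metis PiE_mem lessThan_iff)
  qed
qed

lemma unfold_idx_in_multi_idx:
  assumes m: "m \<in> PiE \<pi> (\<lambda>B. {..<unfold_dims d B})"
  shows "unfold_idx m \<in> multi_idx d {1..k}"
proof -
  have "unfold_idx m r \<in> {..<d r}" if r: "r \<in> {1..k}" for r
  proof -
    obtain B where B: "B \<in> \<pi>" "r \<in> B" using ex_block[OF r] by blast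
    have "block_idx d B (m B) \<in> multi_idx d B"
      using bij_betwE[OF bij_betw_block_idx[OF finite_block[OF B(1)] block_dims_ge_1[OF B(1)]]] PiE_mem[OF m B(1)] by blast
    then show ?thesis using unfold_idx_at[OF B] B(2) unfolding multi_idx_def by auto
  qed
  moreover have "unfold_idx m \<in> extensional {1..k}" by (simp add: extensional_def unfold_idx_def)
  ultimately show ?thesis unfolding multi_idx_def by (simp add: PiE_iff)
qed

lemma unfold_idx_block_pos:
  assumes i: "i \<in> multi_idx d {1..k}"
  shows "unfold_idx (\<lambda>B\<in>\<pi>. block_pos d B (restrict i B)) = i"
proof
  fix r show "unfold_idx (\<lambda>B\<in>\<pi>. block_pos d B (restrict i B)) r = i r"
  proof (cases "r \<in> {1..k}")
    case True
    then obtain B where B: "B \<in> \<pi>" "r \<in> B" using ex_block by blast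
    have "restrict i B \<in> multi_idx d B" using restrict_in_multi_idx[OF i block_subset[OF B(1)]] .
    then show ?thesis
      using unfold_idx_at[OF B] block_idx_block_pos[OF finite_block[OF B(1)] block_dims_ge_1[OF B(1)]] B by simp
  next
    case False
    then have "unfold_idx (\<lambda>B\<in>\<pi>. block_pos d B (restrict i B)) r = undefined"
      unfolding unfold_idx_def by (rule if_not_P)
    then show ?thesis using PiE_arb[OF i[unfolded multi_idx_def] False] by simp
  qed
qed

lemma bij_betw_unfold_idx: "bij_betw unfold_idx (PiE \<pi> (\<lambda>B. {..<unfold_dims d B})) (multi_idx d {1..k})"
proof -
  have "multi_idx d {1..k} \<subseteq> unfold_idx ` PiE \<pi> (\<lambda>B. {..<unfold_dims d B})"
  proof
    fix i assume i: "i \<in> multi_idx d {1..k}"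
    have "(\<lambda>B\<in>\<pi>. block_pos d B (restrict i B)) \<in> PiE \<pi> (\<lambda>B. {..<unfold_dims d B})"
      using block_pos_less[OF finite_block block_dims_ge_1 restrict_in_multi_idx[OF i block_subset]] by auto
    then show "i \<in> unfold_idx ` PiE \<pi> (\<lambda>B. {..<unfold_dims d B})"
      using unfold_idx_block_pos[OF i] by (metis image_eqI)
  qed
  then show ?thesis
    using inj_on_unfold_idx unfold_idx_in_multi_idx unfolding bij_betw_def by blast
qed

definition block_form :: "((nat \<Rightarrow> nat) \<Rightarrow> real) \<Rightarrow> (nat set \<Rightarrow> (nat \<Rightarrow> nat) \<Rightarrow> real) \<Rightarrow> real" where
  "block_form A y = (\<Sum>i\<in>multi_idx d {1..k}. A i * (\<Prod>B\<in>\<pi>. y B (restrict i B)))"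

lemma mlform_unfold_eq_block_form:
  "mlform \<pi> (unfold_dims d) (unfold k d \<pi> A) x = block_form A (\<lambda>B j. x B (block_pos d B j))"
  unfolding mlform_def block_form_def
proof (subst sum.reindex_bij_betw[OF bij_betw_unfold_idx, symmetric], intro sum.cong refl)
  fix m assume m: "m \<in> PiE \<pi> (\<lambda>B. {..<unfold_dims d B})"
  have "x B (block_pos d B (restrict (unfold_idx m) B)) = x B (m B)" if B: "B \<in> \<pi>" for B
    using restrict_unfold_idx[OF B] block_pos_block_idx[OF finite_block[OF B] block_dims_ge_1[OF B]] m B
    by (simp add: PiE_iff)
  then show "unfold k d \<pi> A m * (\<Prod>B\<in>\<pi>. x B (m B))
      = A (unfold_idx m) * (\<Prod>B\<in>\<pi>. x B (block_pos d B (restrict (unfold_idx m) B)))"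
    by (simp add: unfold_eq)
qed

lemma block_form_cong:
  assumes "\<And>B j. B \<in> \<pi> \<Longrightarrow> j \<in> multi_idx d B \<Longrightarrow> y B j = y' B j"
  shows "block_form A y = block_form A y'"
  unfolding block_form_def
  using assms restrict_in_multi_idx block_subset by (intro sum.cong refl arg_cong2[where f="(*)"] prod.cong) blast+

lemma block_form_eq_mlform_unfold:
  "block_form A w = mlform \<pi> (unfold_dims d) (unfold k d \<pi> A) (\<lambda>B a. w B (block_idx d B a))"
  unfolding mlform_unfold_eq_block_form
  using block_idx_block_pos[OF finite_block block_dims_ge_1] by (intro block_form_cong) simp

lemma lpnorm_2_block_idx:
  "B \<in> \<pi> \<Longrightarrow> lpnorm 2 (unfold_dims d B) (\<lambda>a. w (block_idx d B a)) = sqrt (\<Sum>j\<in>multi_idx d B. (w j)\<^sup>2)"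
  unfolding lpnorm_2 using sum.reindex_bij_betw[OF bij_betw_block_idx[OF finite_block block_dims_ge_1], of B "\<lambda>j. (w j)\<^sup>2"]
  by (simp add: lessThan_def)

lemma lpnorm_2_eq_block_pos:
  assumes "B \<in> \<pi>"
  shows "lpnorm 2 (unfold_dims d B) v = sqrt (\<Sum>j\<in>multi_idx d B. (v (block_pos d B j))\<^sup>2)"
proof -
  have "(\<Sum>j\<in>multi_idx d B. (v (block_pos d B j))\<^sup>2) = (\<Sum>a<unfold_dims d B. (v (block_pos d B (block_idx d B a)))\<^sup>2)"
    using sum.reindex_bij_betw[OF bij_betw_block_idx[OF finite_block[OF assms] block_dims_ge_1[OF assms]],
        of "\<lambda>j. (v (block_pos d B j))\<^sup>2"] by simp
  also have "\<dots> = (\<Sum>a<unfold_dims d B. (v a)\<^sup>2)"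
    using block_pos_block_idx[OF finite_block[OF assms] block_dims_ge_1[OF assms]] by simp
  finally show ?thesis unfolding lpnorm_2 by simp
qed

lemma block_form_le:
  "block_form A w \<le> unfold_norm 2 k d \<pi> A * (\<Prod>B\<in>\<pi>. sqrt (\<Sum>j\<in>multi_idx d B. (w B j)\<^sup>2))"
proof -
  have "block_form A w \<le> unfold_norm 2 k d \<pi> A * (\<Prod>B\<in>\<pi>. lpnorm 2 (unfold_dims d B) (\<lambda>a. w B (block_idx d B a)))"
    unfolding block_form_eq_mlform_unfold unfold_norm_def
    by (rule tensor_shape.mlform_le_tensor_pnorm_mult[OF tensor_shape_unfold]) simp
  also have "(\<Prod>B\<in>\<pi>. lpnorm 2 (unfold_dims d B) (\<lambda>a. w B (block_idx d B a))) = (\<Prod>B\<in>\<pi>. sqrt (\<Sum>j\<in>multi_idx d B. (w B j)\<^sup>2))"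
    using lpnorm_2_block_idx by (intro prod.cong) auto
  finally show ?thesis .
qed

lemma unfold_norm_2_le:
  assumes "\<And>y. \<forall>B\<in>\<pi>. (\<Sum>j\<in>multi_idx d B. (y B j)\<^sup>2) = 1 \<Longrightarrow> block_form A y \<le> c"
  shows "unfold_norm 2 k d \<pi> A \<le> c"
  unfolding unfold_norm_def
proof (rule tensor_shape.tensor_pnorm_le[OF tensor_shape_unfold])
  fix x assume x: "\<forall>B\<in>\<pi>. lpnorm 2 (unfold_dims d B) (x B) = 1"
  have "\<forall>B\<in>\<pi>. (\<Sum>j\<in>multi_idx d B. (x B (block_pos d B j))\<^sup>2) = 1"
  proof
    fix B assume "B \<in> \<pi>"
    then have "sqrt (\<Sum>j\<in>multi_idx d B. (x B (block_pos d B j))\<^sup>2) = 1"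
      using x lpnorm_2_eq_block_pos by metis
    then show "(\<Sum>j\<in>multi_idx d B. (x B (block_pos d B j))\<^sup>2) = 1" by simp
  qed
  then show "mlform \<pi> (unfold_dims d) (unfold k d \<pi> A) x \<le> c"
    unfolding mlform_unfold_eq_block_form by (rule assms)
qed simp

end

section \<open>Comparing the 2-norms of two unfoldings\<close>

locale partition_pair = P: partition_shape k d \<pi> + S: partition_shape k d \<sigma> for k d \<pi> \<sigma>
begin

definition best_overlap :: "nat set \<Rightarrow> real" where
  "best_overlap B = Max ((\<lambda>B'. Dblk d B B') ` \<sigma>)"

definition best_block :: "nat set \<Rightarrow> nat set" where
  "best_block B = (SOME B'. B' \<in> \<sigma> \<and> Dblk d B B' = best_overlap B)"

definition core :: "nat set \<Rightarrow> nat set" where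
  "core B = B \<inter> best_block B"

definition rest :: "nat set \<Rightarrow> nat set" where
  "rest B = B - best_block B"

definition rests :: "nat set" where
  "rests = (\<Union>B\<in>\<pi>. rest B)"

definition rest_dim :: real where
  "rest_dim = (\<Prod>B\<in>\<pi>. \<Prod>n\<in>rest B. real (d n))"

lemma best_block:
  assumes "B \<in> \<pi>"
  shows "best_block B \<in> \<sigma>" "Dblk d B (best_block B) = best_overlap B"
proof -
  obtain r where "r \<in> B" using partition_onD3[OF P.partition] assms by (metis ex_in_conv)
  then have "\<sigma> \<noteq> {}" using S.ex_block P.block_subset[OF assms] by blast
  then have "best_overlap B \<in> (\<lambda>B'. Dblk d B B') ` \<sigma>"
    unfolding best_overlap_def using S.finite_blocks by (intro Max_in) auto
  then have "\<exists>B'. B' \<in> \<sigma> \<and> Dblk d B B' = best_overlap B" by auto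
  then have "best_block B \<in> \<sigma> \<and> Dblk d B (best_block B) = best_overlap B"
    unfolding best_block_def by (rule someI_ex)
  then show "best_block B \<in> \<sigma>" "Dblk d B (best_block B) = best_overlap B" by auto
qed

text \<open>Every block of \<open>\<pi>\<close> meets some block of \<open>\<sigma>\<close>, and nonempty overlaps have size at least 1,
  so the best overlap is never the empty one.\<close>

lemma core_nonempty:
  assumes B: "B \<in> \<pi>"
  shows "core B \<noteq> {}"
proof
  assume empty: "core B = {}"
  obtain r where r: "r \<in> B" using partition_onD3[OF P.partition] B by (metis ex_in_conv)
  then obtain B' where B': "B' \<in> \<sigma>" "r \<in> B'" using S.ex_block P.block_subset[OF B] by blast
  have "1 \<le> (\<Prod>n\<in>B \<inter> B'. real (d n))" using P.block_dims_ge_1[OF B] by (intro prod_ge_1) auto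
  also have "\<dots> = Dblk d B B'" using r B' by (auto simp: Dblk_def)
  also have "\<dots> \<le> best_overlap B" unfolding best_overlap_def using S.finite_blocks B' by (intro Max_ge) auto
  also have "\<dots> = 0" using best_block(2)[OF B] empty by (simp add: Dblk_def core_def)
  finally show False by simp
qed

lemma best_overlap_eq: "B \<in> \<pi> \<Longrightarrow> best_overlap B = (\<Prod>n\<in>core B. real (d n))"
  using best_block(2) core_nonempty by (simp add: Dblk_def core_def)

lemma core_Un_rest: "core B \<union> rest B = B" and core_Int_rest: "core B \<inter> rest B = {}"
  unfolding core_def rest_def by auto

lemma finite_core: "B \<in> \<pi> \<Longrightarrow> finite (core B)" and finite_rest: "B \<in> \<pi> \<Longrightarrow> finite (rest B)"
  using P.finite_block unfolding core_def rest_def by auto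

lemma rests_subset: "rests \<subseteq> {1..k}"
  unfolding rests_def rest_def using P.block_subset by auto

lemma rest_disjoint: "B1 \<in> \<pi> \<Longrightarrow> B2 \<in> \<pi> \<Longrightarrow> B1 \<noteq> B2 \<Longrightarrow> rest B1 \<inter> rest B2 = {}"
  unfolding rest_def using P.block_unique by blast

lemma Int_subset_rest: "B \<in> \<pi> \<Longrightarrow> B' \<in> \<sigma> \<Longrightarrow> best_block B \<noteq> B' \<Longrightarrow> B' \<inter> B \<subseteq> rest B"
  unfolding rest_def using S.block_unique best_block(1) by blast

lemma tdim_eq_dim_pair_mult_rest_dim: "tdim k d = dim_pair d \<pi> \<sigma> * rest_dim"
proof -
  have "tdim k d = (\<Prod>n\<in>\<Union>\<pi>. real (d n))" by (simp add: tdim_def partition_onD1[OF P.partition, symmetric])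
  also have "\<dots> = (\<Prod>B\<in>\<pi>. \<Prod>n\<in>B. real (d n))"
    using P.finite_block P.block_unique by (subst prod.Union_disjoint) auto
  also have "\<dots> = (\<Prod>B\<in>\<pi>. (\<Prod>n\<in>core B. real (d n)) * (\<Prod>n\<in>rest B. real (d n)))"
    using finite_core finite_rest core_Int_rest
    by (intro prod.cong refl) (simp flip: prod.union_disjoint add: core_Un_rest)
  also have "\<dots> = dim_pair d \<pi> \<sigma> * rest_dim"
    by (simp add: prod.distrib rest_dim_def dim_pair_def best_overlap_eq flip: best_overlap_def)
  finally show ?thesis .
qed

lemma dim_pair_pos: "dim_pair d \<pi> \<sigma> > 0"
  unfolding dim_pair_def best_overlap_def[symmetric]
proof (rule prod_pos)
  fix B assume B: "B \<in> \<pi>"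
  have "core B \<subseteq> {1..k}" using P.block_subset[OF B] by (auto simp: core_def)
  then show "best_overlap B > 0" unfolding best_overlap_eq[OF B] by (intro prod_pos) (blast intro: P.dims_pos)
qed

lemma rest_dim_pos: "rest_dim > 0"
  unfolding rest_dim_def
proof (intro prod_pos)
  fix B n assume B: "B \<in> \<pi>" and n: "n \<in> rest B"
  have "n \<in> {1..k}" using P.block_subset[OF B] n by (auto simp: rest_def)
  then show "real (d n) > 0" by (rule P.dims_pos)
qed

text \<open>Freezing the indices on \<open>rests\<close> at \<open>r\<close> turns the \<open>\<pi>\<close>-form of \<open>y\<close> into a \<open>\<sigma>\<close>-form:
  the vector of a \<open>\<sigma>\<close>-block \<open>B'\<close> is a product over the pieces \<open>B' \<inter> B\<close>, carrying \<open>y B\<close> if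
  \<open>B'\<close> is the best block of \<open>B\<close> and the indicator of agreement with \<open>r\<close> otherwise.\<close>

definition slice_factor ::
    "(nat set \<Rightarrow> (nat \<Rightarrow> nat) \<Rightarrow> real) \<Rightarrow> (nat \<Rightarrow> nat) \<Rightarrow> nat set \<Rightarrow> nat set \<Rightarrow> (nat \<Rightarrow> nat) \<Rightarrow> real" where
  "slice_factor y r B' B a =
    (if best_block B = B' then y B (restrict (\<lambda>n. if n \<in> B' then a n else r n) B)
     else if \<forall>n\<in>B' \<inter> B. a n = r n then 1 else 0)"

definition slice_vector :: "(nat set \<Rightarrow> (nat \<Rightarrow> nat) \<Rightarrow> real) \<Rightarrow> (nat \<Rightarrow> nat) \<Rightarrow> nat set \<Rightarrow> (nat \<Rightarrow> nat) \<Rightarrow> real" where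
  "slice_vector y r B' j = (\<Prod>B\<in>\<pi>. slice_factor y r B' B (restrict j (B' \<inter> B)))"

definition fibre_mass :: "(nat set \<Rightarrow> (nat \<Rightarrow> nat) \<Rightarrow> real) \<Rightarrow> nat set \<Rightarrow> (nat \<Rightarrow> nat) \<Rightarrow> real" where
  "fibre_mass y B b = (\<Sum>a\<in>multi_idx d (core B). (y B (restrict (\<lambda>n. if n \<in> best_block B then a n else b n) B))\<^sup>2)"

lemma fibre_mass_nonneg: "fibre_mass y B b \<ge> 0"
  unfolding fibre_mass_def by (simp add: sum_nonneg)

lemma fibre_mass_restrict_rest: "fibre_mass y B b = fibre_mass y B (restrict b (rest B))"
  unfolding fibre_mass_def by (intro sum.cong refl arg_cong[where f="\<lambda>z. z\<^sup>2"] arg_cong[where f="y B"] restrict_ext)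
    (auto simp: rest_def)

lemma prod_slice_factor_on_fibre:
  assumes "restrict i rests = r" "B \<in> \<pi>"
  shows "(\<Prod>B'\<in>\<sigma>. slice_factor y r B' B (restrict i (B' \<inter> B))) = y B (restrict i B)"
proof -
  have r_eq: "r n = i n" if "n \<in> rest B" for n
  proof -
    have "n \<in> rests" using that assms(2) unfolding rests_def by blast
    then show ?thesis using fun_cong[OF assms(1), of n] by simp
  qed
  have "(\<Prod>B'\<in>\<sigma>. slice_factor y r B' B (restrict i (B' \<inter> B)))
      = slice_factor y r (best_block B) B (restrict i (best_block B \<inter> B))
        * (\<Prod>B'\<in>\<sigma> - {best_block B}. slice_factor y r B' B (restrict i (B' \<inter> B)))"
    using S.finite_blocks best_block(1)[OF assms(2)] by (rule prod.remove)
  also have "(\<Prod>B'\<in>\<sigma> - {best_block B}. slice_factor y r B' B (restrict i (B' \<inter> B))) = 1"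
  proof (rule prod.neutral, rule ballI)
    fix B' assume B': "B' \<in> \<sigma> - {best_block B}"
    then have "B' \<inter> B \<subseteq> rest B" using Int_subset_rest[OF assms(2)] by auto
    then show "slice_factor y r B' B (restrict i (B' \<inter> B)) = 1"
      using B' r_eq by (auto simp: slice_factor_def)
  qed
  also have "slice_factor y r (best_block B) B (restrict i (best_block B \<inter> B)) = y B (restrict i B)"
    using r_eq unfolding slice_factor_def by (auto intro!: arg_cong[where f="y B"] restrict_ext simp: rest_def)
  finally show ?thesis by (simp only: mult_1_right)
qed

lemma prod_slice_factor_off_fibre:
  assumes "r \<in> multi_idx d rests" "i \<in> multi_idx d {1..k}" "restrict i rests \<noteq> r"
  obtains B where "B \<in> \<pi>" "(\<Prod>B'\<in>\<sigma>. slice_factor y r B' B (restrict i (B' \<inter> B))) = 0"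
proof -
  have "\<exists>n\<in>rests. i n \<noteq> r n"
  proof (rule ccontr)
    assume "\<not> (\<exists>n\<in>rests. i n \<noteq> r n)"
    then have "restrict i rests = r"
      using assms(1) unfolding multi_idx_def by (intro ext) (auto simp: PiE_iff extensional_def)
    then show False using assms(3) by simp
  qed
  then obtain n where n: "n \<in> rests" "i n \<noteq> r n" by blast
  then obtain B where B: "B \<in> \<pi>" "n \<in> rest B" unfolding rests_def by blast
  obtain B' where B': "B' \<in> \<sigma>" "n \<in> B'" using S.ex_block n(1) rests_subset by blast
  have "best_block B \<noteq> B'" using B(2) B'(2) by (auto simp: rest_def)
  then have "slice_factor y r B' B (restrict i (B' \<inter> B)) = 0"
    using n(2) B B'(2) by (auto simp: slice_factor_def rest_def)
  then have "(\<Prod>B'\<in>\<sigma>. slice_factor y r B' B (restrict i (B' \<inter> B))) = 0"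
    using S.finite_blocks B'(1) by (intro prod_zero bexI[where x=B']) simp_all
  then show ?thesis using B(1) that by blast
qed

lemma prod_slice_vector:
  assumes "r \<in> multi_idx d rests" "i \<in> multi_idx d {1..k}"
  shows "(\<Prod>B'\<in>\<sigma>. slice_vector y r B' (restrict i B'))
       = (if restrict i rests = r then (\<Prod>B\<in>\<pi>. y B (restrict i B)) else 0)"
proof -
  have "(\<Prod>B'\<in>\<sigma>. slice_vector y r B' (restrict i B'))
      = (\<Prod>B\<in>\<pi>. \<Prod>B'\<in>\<sigma>. slice_factor y r B' B (restrict i (B' \<inter> B)))"
    unfolding slice_vector_def by (subst prod.swap) (simp add: Int_assoc)
  also have "\<dots> = (if restrict i rests = r then (\<Prod>B\<in>\<pi>. y B (restrict i B)) else 0)"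
  proof (cases "restrict i rests = r")
    case False
    then obtain B where "B \<in> \<pi>" "(\<Prod>B'\<in>\<sigma>. slice_factor y r B' B (restrict i (B' \<inter> B))) = 0"
      using prod_slice_factor_off_fibre[OF assms] by blast
    then show ?thesis using False P.finite_blocks by (simp add: prod_zero_iff) blast
  qed (simp add: prod_slice_factor_on_fibre)
  finally show ?thesis .
qed

lemma sum_square_slice_factor:
  assumes "r \<in> multi_idx d rests" "B' \<in> \<sigma>" "B \<in> \<pi>"
  shows "(\<Sum>a\<in>multi_idx d (B' \<inter> B). (slice_factor y r B' B a)\<^sup>2) = (if best_block B = B' then fibre_mass y B r else 1)"
proof (cases "best_block B = B'")
  case True
  then have "core B = B' \<inter> B" unfolding core_def by auto
  then show ?thesis using True by (simp add: slice_factor_def fibre_mass_def)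
next
  case False
  have "B' \<inter> B \<subseteq> rests" using Int_subset_rest[OF assms(3,2) False] assms(3) by (auto simp: rests_def)
  then have r_in: "restrict r (B' \<inter> B) \<in> multi_idx d (B' \<inter> B)" by (rule restrict_in_multi_idx[OF assms(1)])
  have "(slice_factor y r B' B a)\<^sup>2 = (if a = restrict r (B' \<inter> B) then 1 else 0)" if "a \<in> multi_idx d (B' \<inter> B)" for a
  proof -
    have "(\<forall>n\<in>B' \<inter> B. a n = r n) \<longleftrightarrow> a = restrict r (B' \<inter> B)"
      using that by (auto simp: multi_idx_def PiE_iff extensional_def)
    then show ?thesis using False by (simp add: slice_factor_def)
  qed
  then have "(\<Sum>a\<in>multi_idx d (B' \<inter> B). (slice_factor y r B' B a)\<^sup>2)
      = (\<Sum>a\<in>multi_idx d (B' \<inter> B). if a = restrict r (B' \<inter> B) then 1 else 0)"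
    by (rule sum.cong[OF refl])
  also have "\<dots> = 1" using r_in finite_multi_idx[of "B' \<inter> B" d] P.finite_block[OF assms(3)] by (simp add: sum.delta)
  finally show ?thesis using False by simp
qed

lemma sum_square_slice_vector:
  assumes "r \<in> multi_idx d rests" "B' \<in> \<sigma>"
  shows "(\<Sum>j\<in>multi_idx d B'. (slice_vector y r B' j)\<^sup>2) = (\<Prod>B\<in>{B\<in>\<pi>. best_block B = B'}. fibre_mass y B r)"
proof -
  have U: "(\<Union>B\<in>\<pi>. B' \<inter> B) = B'"
    using S.block_subset[OF assms(2)] partition_onD1[OF P.partition] by auto
  have "(\<Sum>j\<in>multi_idx d B'. (slice_vector y r B' j)\<^sup>2)
      = (\<Sum>j\<in>multi_idx d (\<Union>B\<in>\<pi>. B' \<inter> B). \<Prod>B\<in>\<pi>. (slice_factor y r B' B (restrict j (B' \<inter> B)))\<^sup>2)"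
    unfolding U slice_vector_def by (simp add: prod_power_distrib)
  also have "\<dots> = (\<Prod>B\<in>\<pi>. \<Sum>a\<in>multi_idx d (B' \<inter> B). (slice_factor y r B' B a)\<^sup>2)"
    using P.block_unique by (intro sum_multi_idx_UNION_prod[OF P.finite_blocks]) blast
  also have "\<dots> = (\<Prod>B\<in>\<pi>. if best_block B = B' then fibre_mass y B r else 1)"
    using sum_square_slice_factor[OF assms] by (intro prod.cong) auto
  also have "\<dots> = (\<Prod>B\<in>{B\<in>\<pi>. best_block B = B'}. fibre_mass y B r)"
    using P.finite_blocks by (rule prod.inter_filter[symmetric])
  finally show ?thesis .
qed

lemma prod_norm_slice_vector:
  assumes "r \<in> multi_idx d rests"
  shows "(\<Prod>B'\<in>\<sigma>. sqrt (\<Sum>j\<in>multi_idx d B'. (slice_vector y r B' j)\<^sup>2))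
       = (\<Prod>B\<in>\<pi>. sqrt (fibre_mass y B (restrict r (rest B))))"
proof -
  have "(\<Prod>B'\<in>\<sigma>. sqrt (\<Sum>j\<in>multi_idx d B'. (slice_vector y r B' j)\<^sup>2))
      = (\<Prod>B'\<in>\<sigma>. \<Prod>B\<in>{B\<in>\<pi>. best_block B = B'}. sqrt (fibre_mass y B r))"
    using P.finite_blocks by (intro prod.cong refl) (simp add: sum_square_slice_vector[OF assms] real_sqrt_prod)
  also have "\<dots> = (\<Prod>B\<in>\<pi>. sqrt (fibre_mass y B r))"
    by (rule prod.group[OF P.finite_blocks S.finite_blocks]) (use best_block(1) in blast)
  finally show ?thesis by (simp flip: fibre_mass_restrict_rest)
qed

lemma block_form_eq_sum_slices:
  "P.block_form A y = (\<Sum>r\<in>multi_idx d rests. S.block_form A (slice_vector y r))"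
proof -
  have img: "(\<lambda>i. restrict i rests) ` multi_idx d {1..k} \<subseteq> multi_idx d rests"
    using restrict_in_multi_idx rests_subset by blast
  have "P.block_form A y
      = (\<Sum>r\<in>multi_idx d rests. \<Sum>i\<in>{i\<in>multi_idx d {1..k}. restrict i rests = r}. A i * (\<Prod>B\<in>\<pi>. y B (restrict i B)))"
    unfolding P.block_form_def
    using finite_subset[OF rests_subset] by (intro sum.group[symmetric] img finite_multi_idx) auto
  also have "\<dots> = (\<Sum>r\<in>multi_idx d rests. S.block_form A (slice_vector y r))"
  proof (rule sum.cong[OF refl])
    fix r assume r: "r \<in> multi_idx d rests"
    have "S.block_form A (slice_vector y r)
        = (\<Sum>i\<in>multi_idx d {1..k}. A i * (if restrict i rests = r then (\<Prod>B\<in>\<pi>. y B (restrict i B)) else 0))"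
      unfolding S.block_form_def using prod_slice_vector[OF r] by (intro sum.cong refl) simp
    also have "\<dots> = (\<Sum>i\<in>{i\<in>multi_idx d {1..k}. restrict i rests = r}. A i * (\<Prod>B\<in>\<pi>. y B (restrict i B)))"
      by (simp add: sum.inter_filter finite_multi_idx if_distrib cong: if_cong)
    finally show "(\<Sum>i\<in>{i\<in>multi_idx d {1..k}. restrict i rests = r}. A i * (\<Prod>B\<in>\<pi>. y B (restrict i B)))
        = S.block_form A (slice_vector y r)" by simp
  qed
  finally show ?thesis .
qed

lemma sum_fibre_mass:
  assumes "B \<in> \<pi>"
  shows "(\<Sum>b\<in>multi_idx d (rest B). fibre_mass y B b) = (\<Sum>j\<in>multi_idx d B. (y B j)\<^sup>2)"
proof -
  have glue: "restrict (\<lambda>n. if n \<in> best_block B then a n else b n) B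
      = restrict (\<lambda>n. if n \<in> core B then a n else b n) (core B \<union> rest B)" for a b :: "nat \<Rightarrow> nat"
    unfolding core_Un_rest by (intro restrict_ext) (auto simp: core_def)
  have "(\<Sum>b\<in>multi_idx d (rest B). fibre_mass y B b)
      = (\<Sum>a\<in>multi_idx d (core B). \<Sum>b\<in>multi_idx d (rest B).
           (y B (restrict (\<lambda>n. if n \<in> core B then a n else b n) (core B \<union> rest B)))\<^sup>2)"
    unfolding fibre_mass_def glue by (rule sum.swap)
  also have "\<dots> = (\<Sum>j\<in>multi_idx d (core B \<union> rest B). (y B j)\<^sup>2)"
    by (rule sum_multi_idx_Un[OF core_Int_rest, symmetric])
  finally show ?thesis by (simp add: core_Un_rest)
qed

lemma sum_sqrt_fibre_mass_le:
  assumes "B \<in> \<pi>" "(\<Sum>j\<in>multi_idx d B. (y B j)\<^sup>2) = 1"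
  shows "(\<Sum>b\<in>multi_idx d (rest B). sqrt (fibre_mass y B b)) \<le> sqrt (\<Prod>n\<in>rest B. real (d n))"
proof (rule real_le_rsqrt)
  have "(\<Sum>b\<in>multi_idx d (rest B). 1 * sqrt (fibre_mass y B b))\<^sup>2
      \<le> (\<Sum>b\<in>multi_idx d (rest B). 1\<^sup>2) * (\<Sum>b\<in>multi_idx d (rest B). (sqrt (fibre_mass y B b))\<^sup>2)"
    by (rule Cauchy_Schwarz_ineq_sum)
  also have "\<dots> = real (card (multi_idx d (rest B)))"
    using sum_fibre_mass[OF assms(1)] assms(2) by (simp add: fibre_mass_nonneg)
  finally show "(\<Sum>b\<in>multi_idx d (rest B). sqrt (fibre_mass y B b))\<^sup>2 \<le> (\<Prod>n\<in>rest B. real (d n))"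
    using card_multi_idx[OF finite_rest[OF assms(1)]] by simp
qed

lemma unfold_norm_2_le_sqrt_rest_dim:
  assumes "k \<ge> 1"
  shows "unfold_norm 2 k d \<pi> A \<le> sqrt rest_dim * unfold_norm 2 k d \<sigma> A"
proof (rule P.unfold_norm_2_le)
  fix y :: "nat set \<Rightarrow> (nat \<Rightarrow> nat) \<Rightarrow> real" assume y: "\<forall>B\<in>\<pi>. (\<Sum>j\<in>multi_idx d B. (y B j)\<^sup>2) = 1"
  have "(\<Sum>r\<in>multi_idx d rests. \<Prod>B\<in>\<pi>. sqrt (fibre_mass y B (restrict r (rest B))))
      = (\<Prod>B\<in>\<pi>. \<Sum>b\<in>multi_idx d (rest B). sqrt (fibre_mass y B b))"
    unfolding rests_def using rest_disjoint by (intro sum_multi_idx_UNION_prod[OF P.finite_blocks]) blast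
  also have "\<dots> \<le> (\<Prod>B\<in>\<pi>. sqrt (\<Prod>n\<in>rest B. real (d n)))"
    using sum_sqrt_fibre_mass_le y by (intro prod_mono) (auto intro!: sum_nonneg simp: fibre_mass_nonneg)
  also have "\<dots> = sqrt rest_dim" unfolding rest_dim_def by (simp add: real_sqrt_prod[OF P.finite_blocks])
  finally have fibres: "(\<Sum>r\<in>multi_idx d rests. \<Prod>B\<in>\<pi>. sqrt (fibre_mass y B (restrict r (rest B)))) \<le> sqrt rest_dim" .
  have "P.block_form A y = (\<Sum>r\<in>multi_idx d rests. S.block_form A (slice_vector y r))"
    by (rule block_form_eq_sum_slices)
  also have "\<dots> \<le> (\<Sum>r\<in>multi_idx d rests. unfold_norm 2 k d \<sigma> A * (\<Prod>B'\<in>\<sigma>. sqrt (\<Sum>j\<in>multi_idx d B'. (slice_vector y r B' j)\<^sup>2)))"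
    by (intro sum_mono S.block_form_le)
  also have "\<dots> = unfold_norm 2 k d \<sigma> A * (\<Sum>r\<in>multi_idx d rests. \<Prod>B\<in>\<pi>. sqrt (fibre_mass y B (restrict r (rest B))))"
    by (simp add: sum_distrib_left prod_norm_slice_vector)
  also have "\<dots> \<le> unfold_norm 2 k d \<sigma> A * sqrt rest_dim"
    using fibres S.unfold_norm_nonneg assms by (intro mult_left_mono) auto
  finally show "P.block_form A y \<le> sqrt rest_dim * unfold_norm 2 k d \<sigma> A"
    by (simp add: mult.commute)
qed

lemma sqrt_rest_dim: "sqrt rest_dim = tdim k d powr (1/2) / dim_pair d \<pi> \<sigma> powr (1/2)"
  using rest_dim_pos dim_pair_pos by (simp add: tdim_eq_dim_pair_mult_rest_dim powr_mult powr_half_sqrt)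

lemma unfold_norm_le_exponent_le_2:
  assumes "k \<ge> 1" "1 \<le> p" "p \<le> 2"
  shows "unfold_norm p k d \<pi> A \<le> tdim k d powr (inv_exp p) / dim_pair d \<pi> \<sigma> powr (1/2) * unfold_norm p k d \<sigma> A"
proof -
  have "unfold_norm p k d \<pi> A \<le> unfold_norm 2 k d \<pi> A"
    by (rule P.unfold_norm_mono_exponent[OF assms(2,3)])
  also have "\<dots> \<le> sqrt rest_dim * unfold_norm 2 k d \<sigma> A"
    by (rule unfold_norm_2_le_sqrt_rest_dim[OF assms(1)])
  also have "\<dots> \<le> sqrt rest_dim * (tdim k d powr (inv_exp p - 1/2) * unfold_norm p k d \<sigma> A)"
    using S.unfold_norm_le_powr_unfold_norm[OF assms(2,3), of A] rest_dim_pos by (intro mult_left_mono) auto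
  also have "\<dots> = tdim k d powr (inv_exp p) / dim_pair d \<pi> \<sigma> powr (1/2) * unfold_norm p k d \<sigma> A"
    using P.tdim_pos by (simp add: sqrt_rest_dim powr_diff)
  finally show ?thesis .
qed

lemma unfold_norm_le_exponent_ge_2:
  assumes "k \<ge> 1" "2 \<le> p"
  shows "unfold_norm p k d \<pi> A \<le> tdim k d powr (1 - inv_exp p) / dim_pair d \<pi> \<sigma> powr (1/2) * unfold_norm p k d \<sigma> A"
proof -
  have "unfold_norm p k d \<pi> A \<le> tdim k d powr (1/2 - inv_exp p) * unfold_norm 2 k d \<pi> A"
    using P.unfold_norm_le_powr_unfold_norm[of 2 p, OF _ assms(2)] by simp
  also have "\<dots> \<le> tdim k d powr (1/2 - inv_exp p) * (sqrt rest_dim * unfold_norm p k d \<sigma> A)"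
  proof (rule mult_left_mono)
    have "unfold_norm 2 k d \<sigma> A \<le> unfold_norm p k d \<sigma> A"
      using S.unfold_norm_mono_exponent[of 2 p, OF _ assms(2)] by simp
    then show "unfold_norm 2 k d \<pi> A \<le> sqrt rest_dim * unfold_norm p k d \<sigma> A"
      using unfold_norm_2_le_sqrt_rest_dim[OF assms(1), of A] rest_dim_pos
      by (meson mult_left_mono order_trans real_sqrt_ge_zero less_imp_le)
  qed simp
  also have "\<dots> = tdim k d powr (1 - inv_exp p) / dim_pair d \<pi> \<sigma> powr (1/2) * unfold_norm p k d \<sigma> A"
    using P.tdim_pos by (simp add: sqrt_rest_dim powr_diff powr_add[symmetric])
  finally show ?thesis .
qed

end

lemma powr_neg_bound_of_powr_bound:
  fixes D P :: real
  assumes "D > 0" "P > 0" "x \<le> D powr t / P powr (1/2) * y"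
  shows "D powr (- t) / P powr (-1/2) * x \<le> y"
proof -
  have "D powr (- t) / P powr (-1/2) = P powr (1/2) / D powr t"
    using assms(1,2) by (simp add: powr_minus divide_simps)
  moreover have "P powr (1/2) / D powr t * x \<le> P powr (1/2) / D powr t * (D powr t / P powr (1/2) * y)"
    using assms by (intro mult_left_mono) auto
  ultimately show ?thesis using assms(1,2) by simp
qed

theorem theorem4p16:
  fixes k :: nat and d :: "nat \<Rightarrow> nat" and A :: "(nat \<Rightarrow> nat) \<Rightarrow> real"
    and \<pi>1 \<pi>2 :: "nat set set" and p :: ereal
  assumes "\<forall>n\<in>{1..k}. d n \<ge> 1"
    and "partition_on {1..k} \<pi>1" and "partition_on {1..k} \<pi>2"
  shows "(1 \<le> p \<and> p \<le> 2 \<longrightarrow>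
            tdim k d powr (- inv_exp p) / dim_pair d \<pi>1 \<pi>2 powr (-1/2) * unfold_norm p k d \<pi>1 A
              \<le> unfold_norm p k d \<pi>2 A
          \<and> unfold_norm p k d \<pi>2 A
              \<le> tdim k d powr (inv_exp p) / dim_pair d \<pi>2 \<pi>1 powr (1/2) * unfold_norm p k d \<pi>1 A)
       \<and> (2 \<le> p \<longrightarrow>
            tdim k d powr (inv_exp p - 1) / dim_pair d \<pi>1 \<pi>2 powr (-1/2) * unfold_norm p k d \<pi>1 A
              \<le> unfold_norm p k d \<pi>2 A
          \<and> unfold_norm p k d \<pi>2 A
              \<le> tdim k d powr (1 - inv_exp p) / dim_pair d \<pi>2 \<pi>1 powr (1/2) * unfold_norm p k d \<pi>1 A)"
proof (cases "k = 0")
  case True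
  then have "\<pi>1 = {}" "\<pi>2 = {}" using assms(2,3) by (simp_all add: partition_on_empty)
  then show ?thesis using True by (simp add: tdim_def dim_pair_def)
next
  case False
  then have k: "k \<ge> 1" by simp
  interpret P12: partition_pair k d \<pi>1 \<pi>2 using assms by unfold_locales
  interpret P21: partition_pair k d \<pi>2 \<pi>1 using assms by unfold_locales
  note powr_neg_bound = powr_neg_bound_of_powr_bound[OF P12.P.tdim_pos P12.dim_pair_pos]
  have "inv_exp p - 1 = - (1 - inv_exp p)" by simp
  then show ?thesis
    using powr_neg_bound[OF P12.unfold_norm_le_exponent_le_2[OF k]] P21.unfold_norm_le_exponent_le_2[OF k]
      powr_neg_bound[OF P12.unfold_norm_le_exponent_ge_2[OF k]] P21.unfold_norm_le_exponent_ge_2[OF k]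
    by simp
qed
end
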